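(* Let $m\ge1$ be a fixed integer. For the random key graph $G(n,X_n,Y_n)$ with $X_n\ge2$ for all large $n$ and edge probability satisfying $q_n\sim\frac{\ln n}{n}$, we have $$\mathbb{E}\Big[\exp\Big(-\frac{nq_n}{X_n}\Big|\bigcup_{i=1}^m S_i\Big|\Big)\Big]\le e^{-mnq_n}\,[1+o(1)]\quad(n\to\infty).$$
   Context: The random key graph $G(n,X_n,Y_n)$ (with $1\le X_n\le Y_n$ integers depending on $n$) has node set $\{v_1,\dots,v_n\}$; each node $v_i$ is independently assigned a set $S_i$ of $X_n$ distinct objects chosen uniformly at random among all $X_n$-element subsets of a pool of $Y_n$ objects; an undirected edge joins $v_i$ and $v_j$ ($i\ne j$) iff $S_i\cap S_j\neq\emptyset$. The edge probability is $q_n=1-\binom{Y_n-X_n}{X_n}/\binom{Y_n}{X_n}$. *)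

theory Defs
  imports "HOL-Probability.Probability" "HOL-Library.Landau_Symbols"
begin

text \<open>Key pool of size Y is modelled as {..<Y}; a key ring is a uniformly random
  X-element subset of the pool.\<close>
definition key_ring_pmf :: "nat \<Rightarrow> nat \<Rightarrow> nat set pmf" where
  "key_ring_pmf X Y = pmf_of_set {S. S \<subseteq> {..<Y} \<and> card S = X}"

definition key_rings_pmf :: "nat \<Rightarrow> nat \<Rightarrow> nat \<Rightarrow> (nat \<Rightarrow> nat set) pmf" where
  "key_rings_pmf m X Y = Pi_pmf {1..m} {} (\<lambda>_. key_ring_pmf X Y)"

definition edge_prob :: "nat \<Rightarrow> nat \<Rightarrow> real" where
  "edge_prob X Y = 1 - real ((Y - X) choose X) / real (Y choose X)"

end

theory Submission
  imports Defs "HOL-Real_Asymp.Real_Asymp"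
begin

text \<open>
  Write \<open>b = n q\<^sub>n / X\<^sub>n\<close>. Expanding \<open>e\<^bsup>b |S \<inter> T|\<^esup> = (1 + (e\<^sup>b - 1))\<^bsup>|S \<inter> T|\<^esup>\<close>
  over the subsets \<open>A\<close> of \<open>T\<close> and using \<open>P(A \<subseteq> S) \<le> (X/Y)\<^bsup>|A|\<^esup>\<close> for a uniform
  \<open>X\<close>-subset \<open>S\<close> of a pool of size \<open>Y\<close> gives \<open>E e\<^bsup>b |S \<inter> T|\<^esup> \<le> exp (|T| (e\<^sup>b - 1) X / Y)\<close>.
  Since \<open>|S \<union> U| = |U| + X - |S \<inter> U|\<close>, adding the key rings one at a time yields
  \<open>E e\<^bsup>-b |S\<^sub>1 \<union> \<dots> \<union> S\<^sub>m|\<^esup> \<le> exp (- b m X + (m X)\<^sup>2 (e\<^sup>b - 1) / Y)\<close>.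
  The first term is \<open>- m n q\<^sub>n\<close>. For the error term, \<open>1 - q\<^sub>n \<le> exp (- X\<^sup>2 / Y)\<close> gives
  \<open>X\<^sup>2 / Y = O(q\<^sub>n) = O(ln n / n)\<close>, while \<open>X \<ge> 2\<close> gives \<open>b \<le> (3/4) ln n\<close>, i.e.
  \<open>e\<^sup>b \<le> n\<^bsup>3/4\<^esup>\<close>; so the error term is \<open>O(ln n / n\<^bsup>1/4\<^esup>) = o(1)\<close>.
\<close>

lemma binomial_shift_le:
  assumes "k \<le> X" "X \<le> Y"
  shows "real ((Y - k) choose (X - k)) \<le> real (Y choose X) * (real X / real Y) ^ k"
  using assms
proof (induction k arbitrary: X Y)
  case 0
  then show ?case by simp
next
  case (Suc k)
  then obtain X' Y' where XY: "X = Suc X'" "Y = Suc Y'"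
    by (metis Suc_le_D le_trans)
  with Suc.prems have "k \<le> X'" "X' \<le> Y'" by auto
  have ratio_mono: "real X' / real Y' \<le> real X / real Y"
    using XY \<open>X' \<le> Y'\<close> by (cases "Y' = 0") (simp_all add: divide_simps algebra_simps)
  have step: "real (Y choose X) * (real X / real Y) = real (Y' choose X')"
    using Suc_times_binomial_eq[of Y' X'] XY
    by (simp add: divide_simps del: of_nat_Suc) (simp add: algebra_simps flip: of_nat_mult)
  have "real ((Y - Suc k) choose (X - Suc k)) = real ((Y' - k) choose (X' - k))"
    using XY by simp
  also have "\<dots> \<le> real (Y' choose X') * (real X' / real Y') ^ k"
    using Suc.IH \<open>k \<le> X'\<close> \<open>X' \<le> Y'\<close> by blast
  also have "\<dots> \<le> real (Y' choose X') * (real X / real Y) ^ k"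
    using ratio_mono by (intro mult_left_mono power_mono) auto
  also have "\<dots> = real (Y choose X) * (real X / real Y) ^ Suc k"
    by (simp flip: step)
  finally show ?case .
qed

lemma
  assumes "X \<le> Y"
  shows finite_key_rings: "finite {S. S \<subseteq> {..<Y} \<and> card S = X}"
    and card_key_rings: "card {S. S \<subseteq> {..<Y} \<and> card S = X} = Y choose X"
    and set_pmf_key_ring: "set_pmf (key_ring_pmf X Y) = {S. S \<subseteq> {..<Y} \<and> card S = X}"
proof -
  show fin: "finite {S. S \<subseteq> {..<Y} \<and> card S = X}"
    by (rule finite_subset[of _ "Pow {..<Y}"]) auto
  show "card {S. S \<subseteq> {..<Y} \<and> card S = X} = Y choose X"
    using n_subsets[of "{..<Y}" X] by simp
  have "{S. S \<subseteq> {..<Y} \<and> card S = X} \<noteq> {}"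
    using assms by (auto intro!: exI[of _ "{..<X}"])
  with fin show "set_pmf (key_ring_pmf X Y) = {S. S \<subseteq> {..<Y} \<and> card S = X}"
    unfolding key_ring_pmf_def by simp
qed

lemma card_supersets_le:
  assumes "A \<subseteq> {..<Y}"
  shows "card {S. S \<subseteq> {..<Y} \<and> card S = X \<and> A \<subseteq> S} \<le> (Y - card A) choose (X - card A)"
proof -
  have "finite A" using assms finite_subset by blast
  have "{S. S \<subseteq> {..<Y} \<and> card S = X \<and> A \<subseteq> S}
      \<subseteq> (\<lambda>B. B \<union> A) ` {B. B \<subseteq> {..<Y} - A \<and> card B = X - card A}"
  proof
    fix S assume S: "S \<in> {S. S \<subseteq> {..<Y} \<and> card S = X \<and> A \<subseteq> S}"
    then have "card (S - A) = X - card A"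
      using \<open>finite A\<close> by (simp add: card_Diff_subset)
    moreover have "S = (S - A) \<union> A" using S by blast
    ultimately show "S \<in> (\<lambda>B. B \<union> A) ` {B. B \<subseteq> {..<Y} - A \<and> card B = X - card A}"
      using S by blast
  qed
  then have "card {S. S \<subseteq> {..<Y} \<and> card S = X \<and> A \<subseteq> S}
      \<le> card ((\<lambda>B. B \<union> A) ` {B. B \<subseteq> {..<Y} - A \<and> card B = X - card A})"
    by (intro card_mono finite_imageI) auto
  also have "\<dots> \<le> card {B. B \<subseteq> {..<Y} - A \<and> card B = X - card A}"
    by (rule card_image_le) auto
  also have "\<dots> = (Y - card A) choose (X - card A)"
    using n_subsets[of "{..<Y} - A" "X - card A"] assms \<open>finite A\<close> by (simp add: card_Diff_subset)
  finally show ?thesis .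
qed

lemma prob_key_ring_superset_le:
  assumes "X \<le> Y" "A \<subseteq> {..<Y}"
  shows "measure_pmf.prob (key_ring_pmf X Y) {S. A \<subseteq> S} \<le> (real X / real Y) ^ card A"
proof (cases "card A \<le> X")
  case False
  have "card A \<le> card S" if "S \<in> set_pmf (key_ring_pmf X Y)" "A \<subseteq> S" for S
    using that set_pmf_key_ring[OF assms(1)] by (intro card_mono) (auto intro: finite_subset)
  with False have "measure_pmf.prob (key_ring_pmf X Y) {S. A \<subseteq> S} = 0"
    using set_pmf_key_ring[OF assms(1)] by (subst measure_pmf_zero_iff) auto
  then show ?thesis by simp
next
  case True
  let ?\<Omega> = "{S. S \<subseteq> {..<Y} \<and> card S = X}"
  have "?\<Omega> \<noteq> {}"
    using assms(1) by (auto intro!: exI[of _ "{..<X}"])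
  then have "measure_pmf.prob (key_ring_pmf X Y) {S. A \<subseteq> S}
      = real (card {S. S \<subseteq> {..<Y} \<and> card S = X \<and> A \<subseteq> S}) / real (Y choose X)"
    unfolding key_ring_pmf_def
    using finite_key_rings[OF assms(1)] card_key_rings[OF assms(1)]
    by (simp add: measure_pmf_of_set Int_def conj_assoc)
  also have "\<dots> \<le> real ((Y - card A) choose (X - card A)) / real (Y choose X)"
    using card_supersets_le[OF assms(2)] by (intro divide_right_mono) auto
  also have "\<dots> \<le> (real X / real Y) ^ card A"
    using binomial_shift_le[OF True assms(1)] assms(1) by (simp add: pos_divide_le_eq mult.commute)
  finally show ?thesis .
qed

lemma power_one_plus_card_eq_sum_Pow:
  fixes c :: "'a::comm_semiring_1"
  assumes "finite B"
  shows "(1 + c) ^ card B = (\<Sum>A\<in>Pow B. c ^ card A)"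
  using prod_add[OF assms, of "\<lambda>_. c" "\<lambda>_. 1"] by (simp add: add.commute)

lemma expectation_exp_card_Int_key_ring_le:
  assumes "X \<le> Y" "T \<subseteq> {..<Y}" "0 \<le> a"
  shows "measure_pmf.expectation (key_ring_pmf X Y) (\<lambda>S. exp (a * real (card (S \<inter> T))))
    \<le> exp (real (card T) * (exp a - 1) * real X / real Y)"
proof -
  define c where "c = exp a - 1"
  have "c \<ge> 0" using assms(3) by (simp add: c_def)
  have "finite T" using assms(2) finite_subset by blast
  have fin: "finite (set_pmf (key_ring_pmf X Y))"
    using finite_key_rings[OF assms(1)] set_pmf_key_ring[OF assms(1)] by simp
  have expand: "exp (a * real (card (S \<inter> T))) = (\<Sum>A\<in>Pow T. c ^ card A * indicator {S. A \<subseteq> S} S)"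
    for S
  proof -
    have "exp (a * real (card (S \<inter> T))) = (1 + c) ^ card (S \<inter> T)"
      by (simp add: c_def exp_of_nat_mult[symmetric] mult.commute)
    also have "\<dots> = (\<Sum>A\<in>Pow (S \<inter> T). c ^ card A)"
      using \<open>finite T\<close> by (intro power_one_plus_card_eq_sum_Pow) simp
    also have "\<dots> = (\<Sum>A\<in>{A \<in> Pow T. A \<subseteq> S}. c ^ card A)"
      by (intro sum.cong) auto
    also have "\<dots> = (\<Sum>A\<in>Pow T. c ^ card A * indicator {S. A \<subseteq> S} S)"
      using \<open>finite T\<close> by (simp add: indicator_def sum.If_cases Int_def)
    finally show ?thesis .
  qed
  have "measure_pmf.expectation (key_ring_pmf X Y) (\<lambda>S. exp (a * real (card (S \<inter> T))))
      = (\<Sum>A\<in>Pow T. c ^ card A * measure_pmf.prob (key_ring_pmf X Y) {S. A \<subseteq> S})"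
    unfolding expand
    by (simp add: integrable_measure_pmf_finite[OF fin])
  also have "\<dots> \<le> (\<Sum>A\<in>Pow T. (c * (real X / real Y)) ^ card A)"
  proof (intro sum_mono)
    fix A assume "A \<in> Pow T"
    then have "measure_pmf.prob (key_ring_pmf X Y) {S. A \<subseteq> S} \<le> (real X / real Y) ^ card A"
      using prob_key_ring_superset_le[OF assms(1)] assms(2) by blast
    then show "c ^ card A * measure_pmf.prob (key_ring_pmf X Y) {S. A \<subseteq> S}
        \<le> (c * (real X / real Y)) ^ card A"
      unfolding power_mult_distrib using \<open>c \<ge> 0\<close> by (intro mult_left_mono) auto
  qed
  also have "\<dots> = (1 + c * (real X / real Y)) ^ card T"
    using \<open>finite T\<close> by (simp add: power_one_plus_card_eq_sum_Pow)
  also have "\<dots> \<le> exp (c * (real X / real Y)) ^ card T"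
    using \<open>c \<ge> 0\<close> by (intro power_mono) (auto simp: add.commute)
  also have "\<dots> = exp (real (card T) * (exp a - 1) * real X / real Y)"
    by (simp add: c_def exp_of_nat_mult[symmetric] mult.assoc)
  finally show ?thesis .
qed

lemma expectation_pair_pmf_finite:
  fixes f :: "'a \<times> 'b \<Rightarrow> real"
  assumes "finite (set_pmf p)" "finite (set_pmf q)"
  shows "measure_pmf.expectation (pair_pmf p q) f
       = measure_pmf.expectation q (\<lambda>y. measure_pmf.expectation p (\<lambda>x. f (x, y)))"
proof -
  have "measure_pmf.expectation (pair_pmf p q) f
      = (\<Sum>x\<in>set_pmf p. \<Sum>y\<in>set_pmf q. f (x, y) * (pmf p x * pmf q y))"
    using assms
    by (subst integral_measure_pmf_real) (auto simp: sum.cartesian_product pmf_pair intro!: sum.cong)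
  also have "\<dots> = (\<Sum>y\<in>set_pmf q. (\<Sum>x\<in>set_pmf p. f (x, y) * pmf p x) * pmf q y)"
    by (subst sum.swap) (simp add: sum_distrib_right mult.assoc)
  also have "\<dots> = measure_pmf.expectation q (\<lambda>y. measure_pmf.expectation p (\<lambda>x. f (x, y)))"
    using assms by (simp add: integral_measure_pmf_real)
  finally show ?thesis .
qed

lemma key_rings_pmf_Suc:
  "key_rings_pmf (Suc k) X Y
     = map_pmf (\<lambda>(S, R). R(Suc k := S)) (pair_pmf (key_ring_pmf X Y) (key_rings_pmf k X Y))"
proof -
  have "{1..Suc k} = insert (Suc k) {1..k}" by auto
  then show ?thesis unfolding key_rings_pmf_def by (simp add: Pi_pmf_insert)
qed

lemma set_pmf_key_rings:
  assumes "X \<le> Y"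
  shows "set_pmf (key_rings_pmf k X Y)
       = PiE_dflt {1..k} {} (\<lambda>_. {S. S \<subseteq> {..<Y} \<and> card S = X})"
  unfolding key_rings_pmf_def set_Pi_pmf[OF finite_atLeastAtMost]
  by (simp add: set_pmf_key_ring[OF assms] comp_def)

lemma finite_set_pmf_key_rings:
  assumes "X \<le> Y"
  shows "finite (set_pmf (key_rings_pmf k X Y))"
  unfolding set_pmf_key_rings[OF assms] using finite_key_rings[OF assms]
  by (intro finite_PiE_dflt) auto

lemma expectation_exp_card_Un_key_ring_le:
  assumes "X \<le> Y" "U \<subseteq> {..<Y}" "0 \<le> b"
  shows "measure_pmf.expectation (key_ring_pmf X Y) (\<lambda>S. exp (- b * real (card (S \<union> U))))
    \<le> exp (- b * real (card U + X)) * exp (real (card U) * (exp b - 1) * real X / real Y)"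
proof -
  have "finite U" using assms(2) finite_subset by blast
  have "measure_pmf.expectation (key_ring_pmf X Y) (\<lambda>S. exp (- b * real (card (S \<union> U))))
      = measure_pmf.expectation (key_ring_pmf X Y)
          (\<lambda>S. exp (- b * real (card U + X)) * exp (b * real (card (S \<inter> U))))"
  proof (intro integral_cong_AE AE_pmfI)
    fix S assume "S \<in> set_pmf (key_ring_pmf X Y)"
    then have "finite S" "card S = X"
      using set_pmf_key_ring[OF assms(1)] finite_subset by auto
    then have "card (S \<union> U) + card (S \<inter> U) = card U + X"
      using card_Un_Int[OF \<open>finite S\<close> \<open>finite U\<close>] by simp
    then have "- b * real (card (S \<union> U)) = - b * real (card U + X) + b * real (card (S \<inter> U))"
      by (simp add: algebra_simps flip: distrib_left of_nat_add)
    then show "exp (- b * real (card (S \<union> U)))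
        = exp (- b * real (card U + X)) * exp (b * real (card (S \<inter> U)))"
      by (simp flip: exp_add)
  qed simp_all
  also have "\<dots> = exp (- b * real (card U + X))
      * measure_pmf.expectation (key_ring_pmf X Y) (\<lambda>S. exp (b * real (card (S \<inter> U))))"
    by (rule integral_mult_right_zero)
  also have "\<dots> \<le> exp (- b * real (card U + X)) * exp (real (card U) * (exp b - 1) * real X / real Y)"
    using expectation_exp_card_Int_key_ring_le[OF assms] by simp
  finally show ?thesis .
qed

lemma expectation_exp_card_Union_key_rings_le:
  assumes "X \<le> Y" "0 \<le> b"
  shows "measure_pmf.expectation (key_rings_pmf k X Y) (\<lambda>S. exp (- b * real (card (\<Union>i\<in>{1..k}. S i))))
    \<le> exp (- b * real k * real X + (real k * real X) ^ 2 * (exp b - 1) / real Y)"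
proof (induction k)
  case 0
  then show ?case by (simp add: key_rings_pmf_def)
next
  case (Suc k)
  define U where "U R = (\<Union>i\<in>{1..k}. R i)" for R :: "nat \<Rightarrow> nat set"
  define E where "E = (exp b - 1) / real Y"
  have "E \<ge> 0" using assms(2) by (simp add: E_def)
  have Un_upd: "(\<Union>i\<in>{1..Suc k}. (R(Suc k := S)) i) = S \<union> U R" for R S
    unfolding U_def by (auto simp: atLeastAtMostSuc_conv)
  have fin: "finite (set_pmf (key_rings_pmf k X Y))"
    using finite_set_pmf_key_rings[OF assms(1)] .
  have U_support: "U R \<subseteq> {..<Y}" "card (U R) \<le> k * X" if "R \<in> set_pmf (key_rings_pmf k X Y)" for R
  proof -
    have R: "R i \<subseteq> {..<Y} \<and> card (R i) = X" if "i \<in> {1..k}" for i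
      using \<open>R \<in> _\<close> that by (auto simp: set_pmf_key_rings[OF assms(1)] PiE_dflt_def)
    then show "U R \<subseteq> {..<Y}" unfolding U_def by blast
    have "card (U R) \<le> (\<Sum>i\<in>{1..k}. card (R i))" unfolding U_def by (rule card_UN_le) simp
    also have "\<dots> = k * X" using R by simp
    finally show "card (U R) \<le> k * X" .
  qed
  have "measure_pmf.expectation (key_rings_pmf (Suc k) X Y)
          (\<lambda>S. exp (- b * real (card (\<Union>i\<in>{1..Suc k}. S i))))
      = measure_pmf.expectation (key_rings_pmf k X Y)
          (\<lambda>R. measure_pmf.expectation (key_ring_pmf X Y) (\<lambda>S. exp (- b * real (card (S \<union> U R)))))"
    unfolding key_rings_pmf_Suc integral_map_pmf case_prod_unfold Un_upd
    using finite_key_rings[OF assms(1)] set_pmf_key_ring[OF assms(1)] fin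
    by (subst expectation_pair_pmf_finite) simp_all
  also have "\<dots> \<le> measure_pmf.expectation (key_rings_pmf k X Y)
          (\<lambda>R. exp (- b * real (card (U R))) * exp (- b * real X + real k * real X * real X * E))"
  proof (intro integral_mono_AE AE_pmfI integrable_measure_pmf_finite[OF fin])
    fix R assume R: "R \<in> set_pmf (key_rings_pmf k X Y)"
    have "real (card (U R)) * (real X * E) \<le> real k * real X * (real X * E)"
      using U_support(2)[OF R] \<open>E \<ge> 0\<close> by (intro mult_right_mono) (simp_all flip: of_nat_mult)
    then have "exp (- b * real (card (U R) + X)) * exp (real (card (U R)) * (real X * E))
        \<le> exp (- b * real (card (U R))) * exp (- b * real X + real k * real X * real X * E)"
      by (simp add: algebra_simps flip: exp_add)
    then show "measure_pmf.expectation (key_ring_pmf X Y) (\<lambda>S. exp (- b * real (card (S \<union> U R))))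
        \<le> exp (- b * real (card (U R))) * exp (- b * real X + real k * real X * real X * E)"
      using expectation_exp_card_Un_key_ring_le[OF assms(1) U_support(1)[OF R] assms(2)]
      by (simp add: E_def mult_ac)
  qed
  also have "\<dots> = measure_pmf.expectation (key_rings_pmf k X Y) (\<lambda>R. exp (- b * real (card (U R))))
      * exp (- b * real X + real k * real X * real X * E)"
    by (rule integral_mult_left_zero)
  also have "\<dots> \<le> exp (- b * real k * real X + (real k * real X) ^ 2 * (exp b - 1) / real Y)
      * exp (- b * real X + real k * real X * real X * E)"
    using Suc.IH unfolding U_def by (intro mult_right_mono) simp_all
  also have "\<dots> \<le> exp (- b * real (Suc k) * real X + (real (Suc k) * real X) ^ 2 * (exp b - 1) / real Y)"
  proof -
    have "(k * X) ^ 2 + k * X * X \<le> (Suc k * X) ^ 2"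
      by (simp add: power2_eq_square algebra_simps)
    then have "(real k * real X) ^ 2 + real k * real X * real X \<le> (real (Suc k) * real X) ^ 2"
      by (metis of_nat_le_iff of_nat_add of_nat_mult of_nat_power)
    then have "((real k * real X) ^ 2 + real k * real X * real X) * E \<le> (real (Suc k) * real X) ^ 2 * E"
      using \<open>E \<ge> 0\<close> by (rule mult_right_mono)
    then show ?thesis by (simp add: E_def algebra_simps flip: exp_add)
  qed
  finally show ?case .
qed

lemma one_minus_edge_prob_le:
  assumes "X \<le> Y"
  shows "1 - edge_prob X Y \<le> exp (- (real X ^ 2) / real Y)"
proof (cases "X \<le> Y - X")
  case False
  then show ?thesis by (simp add: edge_prob_def binomial_eq_0)
next
  case True
  have "1 - edge_prob X Y = (\<Prod>i<X. real (Y - X - i) / real (X - i)) / (\<Prod>i<X. real (Y - i) / real (X - i))"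
    using binomial_altdef_of_nat[OF True, where 'a=real] binomial_altdef_of_nat[OF assms, where 'a=real]
    by (simp add: edge_prob_def atLeast0LessThan)
  also have "\<dots> = (\<Prod>i<X. real (Y - X - i) / real (Y - i))"
    by (subst prod_dividef[symmetric]) (auto intro!: prod.cong simp: divide_simps)
  also have "\<dots> \<le> (\<Prod>i<X. 1 - real X / real Y)"
  proof (rule prod_mono)
    fix i assume "i \<in> {..<X}"
    then have "real (Y - X - i) = real Y - real X - real i" "real (Y - i) = real Y - real i" "i < Y"
      using True assms by auto
    moreover have "(real Y - real X - real i) * real Y \<le> (real Y - real X) * (real Y - real i)"
      using assms by (simp add: algebra_simps mult_right_mono)
    ultimately show "0 \<le> real (Y - X - i) / real (Y - i) \<and> real (Y - X - i) / real (Y - i) \<le> 1 - real X / real Y"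
      by (simp add: divide_simps)
  qed
  also have "\<dots> = (1 - real X / real Y) ^ X"
    by simp
  also have "\<dots> \<le> exp (- real X / real Y) ^ X"
    using assms exp_ge_add_one_self[of "- real X / real Y"] by (intro power_mono) (simp_all add: divide_simps)
  also have "\<dots> = exp (- (real X ^ 2) / real Y)"
    by (simp add: exp_of_nat_mult[symmetric] power2_eq_square)
  finally show ?thesis .
qed

lemma edge_prob_nonneg:
  assumes "X \<le> Y"
  shows "0 \<le> edge_prob X Y"
proof -
  have "exp (- (real X ^ 2) / real Y) \<le> 1" by simp
  with one_minus_edge_prob_le[OF assms] show ?thesis by linarith
qed

lemma sq_div_le_two_edge_prob:
  assumes "X \<le> Y" "edge_prob X Y \<le> 1/2"
  shows "real X ^ 2 / real Y \<le> 2 * edge_prob X Y"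
proof -
  define q where "q = edge_prob X Y"
  have "0 \<le> q" "q \<le> 1/2" using edge_prob_nonneg[OF assms(1)] assms(2) by (simp_all add: q_def)
  have "- q - q\<^sup>2 * 2 \<le> ln (1 - q)"
    using ln_one_minus_pos_lower_bound[of q] \<open>0 \<le> q\<close> \<open>q \<le> 1/2\<close> by simp
  also have "ln (1 - q) \<le> - (real X ^ 2) / real Y"
  proof -
    have "ln (1 - q) \<le> ln (exp (- (real X ^ 2) / real Y))"
      using one_minus_edge_prob_le[OF assms(1)] \<open>q \<le> 1/2\<close> by (intro ln_mono) (simp_all add: q_def)
    then show ?thesis by simp
  qed
  finally have "real X ^ 2 / real Y \<le> q + 2 * q\<^sup>2" by simp
  moreover have "2 * q\<^sup>2 \<le> q"
    using \<open>0 \<le> q\<close> \<open>q \<le> 1/2\<close> mult_left_mono[of q "1/2" q] by (simp add: power2_eq_square)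
  ultimately show ?thesis by (simp add: q_def)
qed

lemma expectation_exp_card_Union_key_rings_log_le:
  fixes n :: nat
  assumes "2 \<le> X" "X \<le> Y" "1 < n"
    and q_half: "edge_prob X Y \<le> 1/2"
    and q_log: "edge_prob X Y \<le> 3/2 * (ln (real n) / real n)"
  shows "measure_pmf.expectation (key_rings_pmf m X Y)
           (\<lambda>S. exp (- (real n * edge_prob X Y / real X) * real (card (\<Union>i\<in>{1..m}. S i))))
    \<le> exp (- real m * real n * edge_prob X Y) * exp (3 * real m ^ 2 * (ln (real n) / real n powr (1/4)))"
proof -
  define q where "q = edge_prob X Y"
  define b where "b = real n * q / real X"
  have "0 \<le> q" using edge_prob_nonneg[OF assms(2)] by (simp add: q_def)
  then have "0 \<le> b" by (simp add: b_def)
  have "b \<le> real n * q / 2"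
    unfolding b_def using assms(1) \<open>0 \<le> q\<close> by (intro divide_left_mono) auto
  also have "\<dots> \<le> 3/4 * ln (real n)"
    using q_log assms(3) by (simp add: q_def field_simps)
  finally have "exp b \<le> real n powr (3/4)"
    using assms(3) by (simp add: powr_def)
  then have exp_b: "exp b - 1 \<le> real n powr (3/4)" "0 \<le> exp b - 1"
    using \<open>0 \<le> b\<close> by simp_all
  have sq: "real X ^ 2 / real Y \<le> 3 * (ln (real n) / real n)" "0 \<le> real X ^ 2 / real Y"
    using sq_div_le_two_edge_prob[OF assms(2) q_half] q_log by simp_all
  have "(real m * real X) ^ 2 * (exp b - 1) / real Y = real m ^ 2 * (real X ^ 2 / real Y * (exp b - 1))"
    by (simp add: power_mult_distrib)
  also have "\<dots> \<le> real m ^ 2 * (3 * (ln (real n) / real n) * real n powr (3/4))"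
    using exp_b sq assms(3) by (intro mult_left_mono mult_mono) simp_all
  also have "\<dots> = 3 * real m ^ 2 * (ln (real n) / real n powr (1/4))"
    using assms(3) by (simp add: field_simps flip: powr_add)
  finally have exponent: "(real m * real X) ^ 2 * (exp b - 1) / real Y
      \<le> 3 * real m ^ 2 * (ln (real n) / real n powr (1/4))" .
  have "- b * real m * real X = - real m * real n * q"
    using assms(1) by (simp add: b_def)
  then show ?thesis
    using expectation_exp_card_Union_key_rings_le[OF assms(2) \<open>0 \<le> b\<close>, of m] exponent
    by (simp add: b_def q_def exp_add[symmetric] order_trans)
qed

lemma asymp_equiv_ln_div_eventually_le:
  fixes q :: "nat \<Rightarrow> real"
  assumes "q \<sim>[at_top] (\<lambda>n. ln (real n) / real n)"
  shows "eventually (\<lambda>n. 1 < n \<and> q n \<le> 1/2 \<and> q n \<le> 3/2 * (ln (real n) / real n)) at_top"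
proof -
  have "(\<lambda>n::nat. ln (real n) / real n) \<longlonglongrightarrow> 0" by real_asymp
  then have "q \<longlonglongrightarrow> 0"
    by (rule asymp_equiv_tendsto_transfer[OF asymp_equiv_symI[OF assms]])
  then have "eventually (\<lambda>n. q n < 1/2) at_top"
    by (rule order_tendstoD(2)) simp
  moreover have "eventually (\<lambda>n::nat. n > 1) at_top" by (rule eventually_gt_at_top)
  moreover have "(\<lambda>n. q n / (ln (real n) / real n)) \<longlonglongrightarrow> 1"
    using asymp_equivD_strong[OF assms] calculation(2) by (simp add: eventually_mono)
  then have "eventually (\<lambda>n. q n / (ln (real n) / real n) < 3/2) at_top"
    by (rule order_tendstoD(2)) simp
  ultimately show ?thesis
    by eventually_elim (simp add: field_simps)
qed

theorem mainTheorem7: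
  fixes m :: nat and X Y :: "nat \<Rightarrow> nat"
  assumes "m \<ge> 1"
    and "\<And>n. 1 \<le> X n \<and> X n \<le> Y n"
    and "eventually (\<lambda>n. X n \<ge> 2) at_top"
    and "(\<lambda>n. edge_prob (X n) (Y n)) \<sim>[at_top] (\<lambda>n. ln (real n) / real n)"
  shows "\<exists>h :: nat \<Rightarrow> real. h \<longlonglongrightarrow> 0 \<and>
     eventually (\<lambda>n.
       measure_pmf.expectation (key_rings_pmf m (X n) (Y n))
         (\<lambda>S. exp (- (real n * edge_prob (X n) (Y n) / real (X n)) * real (card (\<Union>i\<in>{1..m}. S i))))
       \<le> exp (- real m * real n * edge_prob (X n) (Y n)) * (1 + h n)) at_top"
proof -
  define h where "h n = exp (3 * real m ^ 2 * (ln (real n) / real n powr (1/4))) - 1" for n :: nat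
  have "h \<longlonglongrightarrow> 0" unfolding h_def by real_asymp
  moreover have "eventually (\<lambda>n.
       measure_pmf.expectation (key_rings_pmf m (X n) (Y n))
         (\<lambda>S. exp (- (real n * edge_prob (X n) (Y n) / real (X n)) * real (card (\<Union>i\<in>{1..m}. S i))))
       \<le> exp (- real m * real n * edge_prob (X n) (Y n)) * (1 + h n)) at_top"
    using assms(3) asymp_equiv_ln_div_eventually_le[OF assms(4)]
  proof eventually_elim
    case (elim n)
    then show ?case
      using expectation_exp_card_Union_key_rings_log_le[of "X n" "Y n" n m] assms(2)[of n]
      by (simp add: h_def)
  qed
  ultimately show ?thesis by blast
qed

end
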